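(* Let $A$ be a commutative ring with $1$ and $M\in\operatorname{Sym}_n(A)$. Then $\Sigma(M)$ is an $A$-submodule of $A^n$.
   Context: $\Sigma A^2$ denotes the set of finite sums of squares of elements of $A$. A matrix $N\in\operatorname{Sym}_n(A)$ is a sum of squares if $N=Q^{t}Q$ for some $Q\in\operatorname{Mat}_{m,n}(A)$ and some $m$, equivalently $N=\sum_{i=1}^m w_iw_i^{t}$ for column vectors $w_i\in A^n$. For $M\in\operatorname{Sym}_n(A)$, $\Sigma(M)$ is the set of column vectors $v\in A^n$ such that $sM=vv^{t}+N$ for some $s\in\Sigma A^2$ and some $N\in\operatorname{Sym}_n(A)$ which is a sum of squares. *)

theory Defs
  imports "HOL-Analysis.Analysis"
begin

definition sum_squares :: "'a::comm_ring_1 set" where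
  "sum_squares = {s. \<exists>(m::nat) (a::nat \<Rightarrow> 'a). s = (\<Sum>k<m. (a k)^2)}"

definition is_sym :: "'a ^ 'n ^ 'n \<Rightarrow> bool" where
  "is_sym M \<longleftrightarrow> (\<forall>i j. M $ i $ j = M $ j $ i)"

definition outer :: "'a::times ^ 'n \<Rightarrow> 'a ^ 'n \<Rightarrow> 'a ^ 'n ^ 'n" where
  "outer v w = (\<chi> i j. v $ i * w $ j)"

text \<open>N is a sum of squares: N = Q^t Q = sum of w_i w_i^t.\<close>
definition is_sos_matrix :: "'a::comm_ring_1 ^ 'n ^ 'n \<Rightarrow> bool" where
  "is_sos_matrix N \<longleftrightarrow> is_sym N \<and>
     (\<exists>(m::nat) (w::nat \<Rightarrow> 'a ^ 'n). N = (\<Sum>k<m. outer (w k) (w k)))"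

definition Sigma_set :: "'a::comm_ring_1 ^ 'n ^ 'n \<Rightarrow> ('a ^ 'n) set" where
  "Sigma_set M = {v. \<exists>s N. s \<in> sum_squares \<and> is_sos_matrix N \<and>
       (\<chi> i j. s * M $ i $ j) = outer v v + N}"

end

theory Submission
  imports Defs
begin

text \<open>Adding the certificates \<open>s M = x x\<^sup>t + N\<close> and \<open>t M = y y\<^sup>t + P\<close> twice each
  and using the polarisation identity \<open>(x + y)(x + y)\<^sup>t + (x - y)(x - y)\<^sup>t = 2 x x\<^sup>t + 2 y y\<^sup>t\<close>
  gives \<open>(2s + 2t) M = (x + y)(x + y)\<^sup>t + ((x - y)(x - y)\<^sup>t + 2N + 2P)\<close>, a certificate for
  \<open>x + y\<close>; multiplying a certificate for \<open>v\<close> by \<open>c\<^sup>2\<close> gives one for \<open>c v\<close>.\<close>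

lemma sum_lessThan_concat_family:
  fixes f :: "'b \<Rightarrow> 'c::comm_monoid_add" and a b :: "nat \<Rightarrow> 'b" and m n :: nat
  shows "\<exists>c. (\<Sum>k<m. f (a k)) + (\<Sum>k<n. f (b k)) = (\<Sum>k<m + n. f (c k))"
proof
  let ?c = "\<lambda>k. if k < m then a k else b (k - m)"
  have "(\<Sum>k<m + n'. f (?c k)) = (\<Sum>k<m. f (a k)) + (\<Sum>k<n'. f (b k))" for n'
    by (induction n') (simp_all add: add.assoc)
  then show "(\<Sum>k<m. f (a k)) + (\<Sum>k<n. f (b k)) = (\<Sum>k<m + n. f (?c k))"
    by simp
qed

lemma module_vec: "module ((*s) :: 'a::comm_ring_1 \<Rightarrow> 'a ^ 'n \<Rightarrow> 'a ^ 'n)"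
  by unfold_locales (simp_all add: vec_eq_iff algebra_simps)

lemma zero_in_sum_squares: "0 \<in> sum_squares"
  unfolding sum_squares_def by (auto intro: exI[of _ 0])

lemma sum_squares_add:
  assumes "s \<in> sum_squares" and "t \<in> sum_squares"
  shows "s + t \<in> sum_squares"
proof -
  from assms obtain m n :: nat and a b where "s = (\<Sum>k<m. (a k)\<^sup>2)" and "t = (\<Sum>k<n. (b k)\<^sup>2)"
    unfolding sum_squares_def by blast
  with sum_lessThan_concat_family[where f="\<lambda>x. x\<^sup>2" and m=m and a=a and n=n and b=b] show ?thesis
    unfolding sum_squares_def by auto
qed

lemma sum_squares_mult_square:
  assumes "s \<in> sum_squares"
  shows "c\<^sup>2 * s \<in> sum_squares"
proof -
  from assms obtain m :: nat and a where "s = (\<Sum>k<m. (a k)\<^sup>2)"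
    unfolding sum_squares_def by blast
  then have "c\<^sup>2 * s = (\<Sum>k<m. (c * a k)\<^sup>2)"
    by (simp add: sum_distrib_left power_mult_distrib)
  then show ?thesis
    unfolding sum_squares_def by (intro CollectI exI[of _ m] exI[of _ "\<lambda>k. c * a k"])
qed

definition scale_matrix :: "'a::times \<Rightarrow> 'a ^ 'n ^ 'm \<Rightarrow> 'a ^ 'n ^ 'm" where
  "scale_matrix c A = (\<chi> i j. c * A $ i $ j)"

lemma scale_matrix_add_left:
  "scale_matrix (s + t) A = scale_matrix s A + scale_matrix t A"
  for s t :: "'a::semiring"
  by (simp add: scale_matrix_def vec_eq_iff distrib_right)

lemma scale_matrix_add_right:
  "scale_matrix c (A + B) = scale_matrix c A + scale_matrix c B"
  for c :: "'a::semiring"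
  by (simp add: scale_matrix_def vec_eq_iff distrib_left)

lemma scale_matrix_mult:
  "scale_matrix (c * s) A = scale_matrix c (scale_matrix s A)"
  for c s :: "'a::semigroup_mult"
  by (simp add: scale_matrix_def vec_eq_iff mult.assoc)

lemma outer_scale: "outer (c *s v) (c *s v) = scale_matrix (c\<^sup>2) (outer v v)"
  for c :: "'a::comm_ring_1"
  by (simp add: outer_def scale_matrix_def vec_eq_iff power2_eq_square ac_simps)

lemma outer_polarization:
  "outer (x + y) (x + y) + outer (x - y) (x - y) = (outer x x + outer x x) + (outer y y + outer y y)"
  for x y :: "'a::comm_ring_1 ^ 'n"
  by (simp add: outer_def vec_eq_iff algebra_simps)

lemma is_sos_matrix_iff:
  "is_sos_matrix N \<longleftrightarrow> (\<exists>(m::nat) w. N = (\<Sum>k<m. outer (w k) (w k)))"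
proof -
  have "is_sym (\<Sum>k<m. outer (w k) (w k))" for m :: nat and w :: "nat \<Rightarrow> 'a ^ 'b"
    by (simp add: is_sym_def sum_component outer_def mult.commute)
  then show ?thesis
    unfolding is_sos_matrix_def by blast
qed

lemma is_sos_matrix_zero: "is_sos_matrix 0"
  unfolding is_sos_matrix_iff by (auto intro: exI[of _ 0])

lemma is_sos_matrix_outer: "is_sos_matrix (outer w w)"
  unfolding is_sos_matrix_iff by (rule exI[of _ 1], rule exI[of _ "\<lambda>_. w"]) simp

lemma is_sos_matrix_add:
  assumes "is_sos_matrix N" and "is_sos_matrix P"
  shows "is_sos_matrix (N + P)"
proof -
  from assms obtain m n :: nat and v w
    where "N = (\<Sum>k<m. outer (v k) (v k))" and "P = (\<Sum>k<n. outer (w k) (w k))"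
    unfolding is_sos_matrix_iff by blast
  with sum_lessThan_concat_family[where f="\<lambda>w. outer w w" and m=m and a=v and n=n and b=w] show ?thesis
    unfolding is_sos_matrix_iff by auto
qed

lemma is_sos_matrix_scale_square:
  assumes "is_sos_matrix N"
  shows "is_sos_matrix (scale_matrix (c\<^sup>2) N)"
proof -
  from assms obtain m :: nat and w where "N = (\<Sum>k<m. outer (w k) (w k))"
    unfolding is_sos_matrix_iff by blast
  then have "scale_matrix (c\<^sup>2) N = (\<Sum>k<m. outer (c *s w k) (c *s w k))"
    by (simp add: outer_scale scale_matrix_def vec_eq_iff sum_component sum_distrib_left)
  then show ?thesis
    unfolding is_sos_matrix_iff by (intro exI[of _ m] exI[of _ "\<lambda>k. c *s w k"])
qed

lemma Sigma_set_iff: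
  "v \<in> Sigma_set M \<longleftrightarrow>
     (\<exists>s N. s \<in> sum_squares \<and> is_sos_matrix N \<and> scale_matrix s M = outer v v + N)"
  unfolding Sigma_set_def scale_matrix_def by simp

lemma zero_in_Sigma_set: "0 \<in> Sigma_set M"
  unfolding Sigma_set_iff
  using zero_in_sum_squares is_sos_matrix_zero
  by (force simp: scale_matrix_def outer_def vec_eq_iff)

lemma Sigma_set_scale:
  assumes "v \<in> Sigma_set M"
  shows "c *s v \<in> Sigma_set M"
proof -
  from assms obtain s N where s: "s \<in> sum_squares" and N: "is_sos_matrix N"
    and cert: "scale_matrix s M = outer v v + N"
    unfolding Sigma_set_iff by blast
  have "scale_matrix (c\<^sup>2 * s) M = outer (c *s v) (c *s v) + scale_matrix (c\<^sup>2) N"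
    by (simp add: scale_matrix_mult cert scale_matrix_add_right outer_scale)
  then show ?thesis
    unfolding Sigma_set_iff
    using sum_squares_mult_square[OF s] is_sos_matrix_scale_square[OF N] by blast
qed

lemma Sigma_set_add:
  assumes "x \<in> Sigma_set M" and "y \<in> Sigma_set M"
  shows "x + y \<in> Sigma_set M"
proof -
  from assms obtain s N t P where s: "s \<in> sum_squares" and N: "is_sos_matrix N"
    and cert_x: "scale_matrix s M = outer x x + N"
    and t: "t \<in> sum_squares" and P: "is_sos_matrix P"
    and cert_y: "scale_matrix t M = outer y y + P"
    unfolding Sigma_set_iff by blast
  let ?N = "outer (x - y) (x - y) + (N + N) + (P + P)"
  have "scale_matrix (s + s + (t + t)) M
      = (outer x x + outer x x) + (outer y y + outer y y) + (N + N) + (P + P)"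
    by (simp only: scale_matrix_add_left cert_x cert_y) (simp only: add_ac)
  also have "\<dots> = outer (x + y) (x + y) + ?N"
    by (simp only: outer_polarization[symmetric]) (simp only: add_ac)
  finally have "scale_matrix (s + s + (t + t)) M = outer (x + y) (x + y) + ?N" .
  moreover have "s + s + (t + t) \<in> sum_squares"
    by (intro sum_squares_add s t)
  moreover have "is_sos_matrix ?N"
    by (intro is_sos_matrix_add is_sos_matrix_outer N P)
  ultimately show ?thesis
    unfolding Sigma_set_iff by blast
qed

theorem lemma3p7:
  fixes M :: "'a::comm_ring_1 ^ 'n ^ 'n"
  assumes "is_sym M"
  shows "module.subspace ((*s) :: 'a \<Rightarrow> 'a ^ 'n \<Rightarrow> 'a ^ 'n) (Sigma_set M)"
  by (rule module.subspaceI[OF module_vec zero_in_Sigma_set Sigma_set_add Sigma_set_scale])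

end
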